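(* Let $\mathcal Q_{bin}$ be the collection of all probability measures $\mu$ on $\{0,1\}^{\mathbb N}$ with $\mathrm{Mean}(\mu)\in\{0,1\}^{\mathbb N}$. Then $\mathcal Q_{bin}$ is non-separable in its means, and $\mathcal Q_{bin}$ is UME-learnable.
   Context: $\{0,1\}^{\mathbb N}$ carries the product $\sigma$-algebra. For a probability measure $\mu$ on $\{0,1\}^{\mathbb N}$, $\mathrm{Mean}(\mu)\in[0,1]^{\mathbb N}$ is the vector whose $j$-th coordinate is $\mathbb E[X_j]$ for $X\sim\mu$; $\mathrm{Mean}(\mathcal Q)=\{\mathrm{Mean}(\mu):\mu\in\mathcal Q\}$. A countable $\varepsilon$-cover of $\mathrm{Mean}(\mathcal Q)$ is a countable set $C\subset[0,1]^{\mathbb N}$ such that every $q\in\mathrm{Mean}(\mathcal Q)$ has some $p\in C$ with $\|q-p\|_\infty<\varepsilon$. $\mathcal Q$ is separable in its means if for every $\varepsilon>0$ a countable $\varepsilon$-cover exists, and non-separable in its means otherwise. $\mathcal Q$ is UME-learnable if there exist (measurable) estimators $\mathcal A_n:(\{0,1\}^{\mathbb N})^n\to[0,1]^{\mathbb N}$ such that for every $\mu\in\mathcal Q$, $\mathbb E_{S\sim\mu^n}\|\mathcal A_n(S)-\mathrm{Mean}(\mu)\|_\infty\to0$ as $n\to\infty$, where $S$ consists of $n$ i.i.d. draws from $\mu$. *)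

theory Defs
  imports "HOL-Probability.Probability"
begin

definition bitseq_space :: "(nat \<Rightarrow> bool) measure" where
  "bitseq_space = (\<Pi>\<^sub>M j\<in>UNIV. count_space UNIV)"

definition Mean :: "(nat \<Rightarrow> bool) measure \<Rightarrow> nat \<Rightarrow> real" where
  "Mean \<mu> = (\<lambda>j. \<integral>x. (if x j then 1 else 0) \<partial>\<mu>)"

definition sup_dist :: "(nat \<Rightarrow> real) \<Rightarrow> (nat \<Rightarrow> real) \<Rightarrow> real" where
  "sup_dist q p = (SUP j. \<bar>q j - p j\<bar>)"

definition unit_cube :: "(nat \<Rightarrow> real) set" where
  "unit_cube = {p. \<forall>j. p j \<in> {0..1}}"

definition separable_in_means :: "(nat \<Rightarrow> bool) measure set \<Rightarrow> bool" where
  "separable_in_means Q \<longleftrightarrow>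
     (\<forall>\<epsilon>>0. \<exists>C. countable C \<and> C \<subseteq> unit_cube \<and>
        (\<forall>q\<in>Mean ` Q. \<exists>p\<in>C. sup_dist q p < \<epsilon>))"

text \<open>Samples of size n: functions on {..<n} distributed as the n-fold product of mu.\<close>
definition UME_learnable :: "(nat \<Rightarrow> bool) measure set \<Rightarrow> bool" where
  "UME_learnable Q \<longleftrightarrow>
     (\<exists>A :: nat \<Rightarrow> (nat \<Rightarrow> nat \<Rightarrow> bool) \<Rightarrow> nat \<Rightarrow> real.
        (\<forall>n. A n \<in> measurable (\<Pi>\<^sub>M i\<in>{..<n}. bitseq_space) (\<Pi>\<^sub>M j\<in>UNIV. borel) \<and>
             (\<forall>S\<in>space (\<Pi>\<^sub>M i\<in>{..<n}. bitseq_space). A n S \<in> unit_cube)) \<and>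
        (\<forall>\<mu>\<in>Q. (\<lambda>n. \<integral>S. sup_dist (A n S) (Mean \<mu>) \<partial>(\<Pi>\<^sub>M i\<in>{..<n}. \<mu>)) \<longlonglongrightarrow> 0))"

definition Q_bin :: "(nat \<Rightarrow> bool) measure set" where
  "Q_bin = {\<mu>. prob_space \<mu> \<and> sets \<mu> = sets bitseq_space \<and> (\<forall>j. Mean \<mu> j \<in> {0, 1})}"

end

theory Submission
  imports Defs
begin

text \<open>
  The Dirac measure at a binary sequence \<open>b\<close> lies in \<open>Q_bin\<close> and has mean \<open>b\<close>. Distinct
  binary vectors are at sup-distance 1, so a sup-ball of radius 1/2 contains at most one of
  them, and a countable 1/2-cover would inject the uncountable set \<open>{0,1}^N\<close> into a countable
  set. Conversely, a coordinate with mean 0 or 1 is almost surely constant, so every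
  \<open>\<mu> \<in> Q_bin\<close> is concentrated on its mean vector: a single sample already reveals the mean
  exactly, and the estimator returning the first sample has expected error 0 for all \<open>n \<ge> 1\<close>.
\<close>

lemma space_bitseq_space [simp]: "space bitseq_space = UNIV"
  by (simp add: bitseq_space_def space_PiM)

lemma measurable_bitseq_coord [measurable]:
  "(\<lambda>x. x j) \<in> measurable bitseq_space (count_space UNIV)"
  unfolding bitseq_space_def by (rule measurable_component_singleton) simp

lemma sets_bitseq_coord: "{x. x j} \<in> sets bitseq_space"
proof -
  have "{x \<in> space bitseq_space. x j} \<in> sets bitseq_space"
    by measurable
  then show ?thesis
    by simp
qed

lemma uncountable_UNIV_nat_bool: "uncountable (UNIV :: (nat \<Rightarrow> bool) set)"
proof
  assume "countable (UNIV :: (nat \<Rightarrow> bool) set)"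
  then obtain f :: "nat \<Rightarrow> nat \<Rightarrow> bool" where "surj f"
    by (metis uncountable_def UNIV_not_empty)
  then have "range (\<lambda>n. Collect (f n)) = Pow UNIV"
    by (auto simp: image_iff) (metis Collect_mem_eq surjD)
  then show False
    using Cantors_theorem by blast
qed

definition real_bits :: "(nat \<Rightarrow> bool) \<Rightarrow> nat \<Rightarrow> real" where
  "real_bits b = (\<lambda>j. if b j then 1 else 0)"

lemma real_bits_in_unit_cube: "real_bits b \<in> unit_cube"
  by (simp add: real_bits_def unit_cube_def)

lemma measurable_real_bits:
  "real_bits \<in> measurable bitseq_space (\<Pi>\<^sub>M j\<in>UNIV. borel)"
  unfolding real_bits_def
proof (rule measurable_PiM_single')
  show "(\<lambda>b. if b j then 1 else 0 :: real) \<in> borel_measurable bitseq_space" for j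
    by measurable
qed simp

lemma Mean_return: "Mean (return bitseq_space b) = real_bits b"
  unfolding Mean_def real_bits_def by (intro ext integral_return) simp_all

lemma return_in_Q_bin: "return bitseq_space b \<in> Q_bin"
  unfolding Q_bin_def by (auto simp: prob_space_return Mean_return real_bits_def)

lemma sup_dist_self [simp]: "sup_dist p p = 0"
  by (simp add: sup_dist_def)

lemma abs_le_sup_dist:
  assumes "p \<in> unit_cube" "q \<in> unit_cube"
  shows "\<bar>q j - p j\<bar> \<le> sup_dist q p"
  unfolding sup_dist_def
proof (rule cSUP_upper)
  have "\<bar>q i - p i\<bar> \<le> 1" for i
  proof -
    have "p i \<in> {0..1}" "q i \<in> {0..1}"
      using assms by (auto simp: unit_cube_def)
    then show ?thesis
      by auto
  qed
  then show "bdd_above (range (\<lambda>i. \<bar>q i - p i\<bar>))"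
    by (intro bdd_aboveI2)
qed simp

lemma real_bits_eqI_near:
  assumes "p \<in> unit_cube"
    and "sup_dist (real_bits a) p < 1/2" "sup_dist (real_bits b) p < 1/2"
  shows "a = b"
proof
  fix j
  have "\<bar>real_bits a j - p j\<bar> < 1/2" "\<bar>real_bits b j - p j\<bar> < 1/2"
    using assms abs_le_sup_dist[OF \<open>p \<in> unit_cube\<close> real_bits_in_unit_cube]
    by (meson le_less_trans)+
  then show "a j = b j"
    by (auto simp: real_bits_def split: if_splits)
qed

lemma not_separable_in_means_Q_bin: "\<not> separable_in_means Q_bin"
proof
  assume "separable_in_means Q_bin"
  then obtain C where "countable C" "C \<subseteq> unit_cube"
    and cover: "\<forall>q\<in>Mean ` Q_bin. \<exists>p\<in>C. sup_dist q p < 1/2"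
    unfolding separable_in_means_def by (meson half_gt_zero zero_less_one)
  have "\<exists>p\<in>C. sup_dist (real_bits b) p < 1/2" for b
    using cover return_in_Q_bin Mean_return by (metis image_eqI)
  then obtain g where g: "\<And>b. g b \<in> C" "\<And>b. sup_dist (real_bits b) (g b) < 1/2"
    by metis
  have "inj g"
    by (rule injI) (use g \<open>C \<subseteq> unit_cube\<close> real_bits_eqI_near in \<open>metis subsetD\<close>)
  moreover have "countable (range g)"
    using \<open>countable C\<close> g(1) by (blast intro: countable_subset)
  ultimately show False
    using uncountable_UNIV_nat_bool countable_image_inj_on by blast
qed

lemma Mean_eq_measure:
  assumes "finite_measure \<mu>" "sets \<mu> = sets bitseq_space"
  shows "Mean \<mu> j = measure \<mu> {x. x j}"
proof -
  have "{x. x j} \<in> sets \<mu>"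
    using assms(2) sets_bitseq_coord by simp
  moreover have "Mean \<mu> j = (\<integral>x. indicator {x. x j} x \<partial>\<mu>)"
    unfolding Mean_def by (simp add: indicator_def of_bool_def)
  ultimately show ?thesis
    using assms(1) by (simp add: finite_measure.emeasure_finite)
qed

lemma AE_real_bits_eq_Mean:
  assumes "\<mu> \<in> Q_bin"
  shows "AE x in \<mu>. real_bits x = Mean \<mu>"
proof -
  interpret prob_space \<mu>
    using assms by (simp add: Q_bin_def)
  have sets: "sets \<mu> = sets bitseq_space" and binary: "Mean \<mu> j \<in> {0, 1}" for j
    using assms by (auto simp: Q_bin_def)
  have Mean_j: "Mean \<mu> j = prob {x. x j}" for j
    using Mean_eq_measure[OF finite_measure_axioms sets] .
  have "AE x in \<mu>. real_bits x j = Mean \<mu> j" for j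
  proof (cases "Mean \<mu> j = 1")
    case True
    then have "AE x in \<mu>. x \<in> {x. x j}"
      using Mean_j by (intro AE_prob_1) simp
    then show ?thesis
      by eventually_elim (use True in \<open>simp add: real_bits_def\<close>)
  next
    case False
    then have zero: "Mean \<mu> j = 0"
      using binary[of j] by simp
    have "{x. x j} \<in> sets \<mu>"
      using sets sets_bitseq_coord by simp
    then have "prob (space \<mu> - {x. x j}) = 1"
      using Mean_j zero by (simp add: prob_compl)
    then have "AE x in \<mu>. x \<in> space \<mu> - {x. x j}"
      by (rule AE_prob_1)
    then show ?thesis
      by eventually_elim (use zero in \<open>simp add: real_bits_def\<close>)
  qed
  then show ?thesis
    by (simp add: AE_all_countable fun_eq_iff)
qed

definition first_sample_estimator :: "nat \<Rightarrow> (nat \<Rightarrow> nat \<Rightarrow> bool) \<Rightarrow> nat \<Rightarrow> real" where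
  "first_sample_estimator n S = (if n = 0 then (\<lambda>j. 0) else real_bits (S 0))"

lemma first_sample_estimator_in_unit_cube: "first_sample_estimator n S \<in> unit_cube"
  by (simp add: first_sample_estimator_def real_bits_in_unit_cube) (simp add: unit_cube_def)

lemma measurable_first_sample_estimator:
  "first_sample_estimator n \<in> measurable (\<Pi>\<^sub>M i\<in>{..<n}. bitseq_space) (\<Pi>\<^sub>M j\<in>UNIV. borel)"
proof (cases "n = 0")
  case True
  then have "first_sample_estimator n = (\<lambda>S j. 0)"
    by (simp add: first_sample_estimator_def fun_eq_iff)
  then show ?thesis
    by (simp add: space_PiM)
next
  case False
  then have "first_sample_estimator n = real_bits \<circ> (\<lambda>S. S 0)"
    by (simp add: first_sample_estimator_def fun_eq_iff)
  moreover have "(\<lambda>S. S 0) \<in> measurable (\<Pi>\<^sub>M i\<in>{..<n}. bitseq_space) bitseq_space"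
    using False by (intro measurable_component_singleton) simp
  ultimately show ?thesis
    using measurable_comp measurable_real_bits by metis
qed

lemma AE_first_sample_estimator_eq_Mean:
  assumes "\<mu> \<in> Q_bin" "0 < n"
  shows "AE S in (\<Pi>\<^sub>M i\<in>{..<n}. \<mu>). first_sample_estimator n S = Mean \<mu>"
proof -
  have "prob_space \<mu>"
    using assms(1) by (simp add: Q_bin_def)
  from AE_PiM_component[where I="{..<n}" and i=0, OF this _ AE_real_bits_eq_Mean[OF assms(1)]]
  show ?thesis
    using assms(2) by (simp add: first_sample_estimator_def)
qed

lemma UME_learnable_Q_bin: "UME_learnable Q_bin"
  unfolding UME_learnable_def
proof (intro exI[of _ first_sample_estimator] conjI allI ballI
    measurable_first_sample_estimator first_sample_estimator_in_unit_cube)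
  fix \<mu> assume "\<mu> \<in> Q_bin"
  have "(\<integral>S. sup_dist (first_sample_estimator n S) (Mean \<mu>) \<partial>(\<Pi>\<^sub>M i\<in>{..<n}. \<mu>)) = 0"
    if "0 < n" for n
    using AE_first_sample_estimator_eq_Mean[OF \<open>\<mu> \<in> Q_bin\<close> that]
    by (intro integral_eq_zero_AE) (auto elim: AE_mp)
  then show "(\<lambda>n. \<integral>S. sup_dist (first_sample_estimator n S) (Mean \<mu>) \<partial>(\<Pi>\<^sub>M i\<in>{..<n}. \<mu>))
      \<longlonglongrightarrow> 0"
    by (intro tendsto_eventually eventually_sequentiallyI[of 1]) simp
qed

theorem mainTheorem5:
  shows "\<not> separable_in_means Q_bin \<and> UME_learnable Q_bin"
  using not_separable_in_means_Q_bin UME_learnable_Q_bin by blast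

end
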